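(* Let $n\ge 30$ be an integer and let $k$ be real with $\frac{n-10}{2}-\sqrt n<k<\frac{n-10}{2}+\sqrt n$. Set $p=1+\frac8k$ and $q=\frac{n-8}{2}$. Then $pJ_2-q_2>0$, where $$J_2=(k+4)(k+6-n)(k+6)(k+8-n)+k(k+2-n)(k+6)(k+8-n)+(k+2)(k+4-n)(k+6)(k+8-n)+k(k+2-n)(k+4)(k+6-n)+(k+2)(k+4-n)(k+4)(k+6-n)+k(k+2-n)(k+2)(k+4-n),$$ $$q_2=\big((q+2)(q+4-n)+q(q+2-n)\big)^2+2q(q+2-n)(q+2)(q+4-n).$$
   Context: Here $k=\frac{8}{p-1}$ corresponds to the homogeneity degree of solutions of $\Delta^4u=|u|^{p-1}u$; the claim is a purely algebraic inequality in the real variable $k$ and the integer $n$. *)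

theory Defs
  imports Complex_Main
begin

end

theory Submission
  imports Defs
begin

text \<open>With \<open>u = k - q\<close> one has the identity \<open>J\<^sub>2 = q\<^sub>2 - u\<^sup>2 (3N\<^sup>2 - 12N - 8 - 6u\<^sup>2)\<close>,
  so that \<open>k (p J\<^sub>2 - q\<^sub>2) = 8 q\<^sub>2 + (k + 8)(J\<^sub>2 - q\<^sub>2) \<ge> 8 q\<^sub>2 - (k + 8) u\<^sup>2 (3N\<^sup>2 - 12N - 8)\<close>.
  The window for \<open>k\<close> says \<open>(u + 1)\<^sup>2 < N\<close>, and replacing \<open>u\<^sup>2\<close> by \<open>N - 2u - 1\<close> turns
  \<open>(k + 8) u\<^sup>2\<close> into a concave quadratic in \<open>u\<close> with maximum \<open>(2N + 7)\<^sup>2 / 8\<close>.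
  What remains is the positivity of the quartic
  \<open>64 q\<^sub>2 - (2N + 7)\<^sup>2 (3N\<^sup>2 - 12N - 8) = 12N\<^sup>4 - 228N\<^sup>3 - 163N\<^sup>2 + 3884N + 4488\<close> for \<open>N \<ge> 20\<close>.\<close>

definition J2 :: "real \<Rightarrow> real \<Rightarrow> real" where
  "J2 N k = (k+4)*(k+6-N)*(k+6)*(k+8-N) + k*(k+2-N)*(k+6)*(k+8-N)
       + (k+2)*(k+4-N)*(k+6)*(k+8-N) + k*(k+2-N)*(k+4)*(k+6-N)
       + (k+2)*(k+4-N)*(k+4)*(k+6-N) + k*(k+2-N)*(k+2)*(k+4-N)"

definition q2 :: "real \<Rightarrow> real" where
  "q2 N = (let q = (N - 8) / 2
           in ((q+2)*(q+4-N) + q*(q+2-N))^2 + 2*q*(q+2-N)*(q+2)*(q+4-N))"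

lemma q2_eq: "64 * q2 N = 24*N^4 - 192*N^3 - 384*N^2 + 3072*N + 4096"
  unfolding q2_def Let_def by (simp add: field_simps power_def)

lemma J2_eq_q2_minus:
  "J2 N k = q2 N - (k - (N-8)/2)^2 * (3*N^2 - 12*N - 8 - 6*(k - (N-8)/2)^2)"
  unfolding J2_def q2_def Let_def by (simp add: field_simps power_def)

lemma window_imp_pos:
  fixes N k :: real
  assumes "N \<ge> 20" and "(k - (N-10)/2)^2 < N"
  shows "k > 0"
proof (rule ccontr)
  assume "\<not> k > 0"
  then have "(N-10)/2 \<le> (N-10)/2 - k" by linarith
  then have "((N-10)/2)^2 \<le> ((N-10)/2 - k)^2"
    by (rule power_mono) (use assms(1) in simp)
  then have "((N-10)/2)^2 \<le> (k - (N-10)/2)^2"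
    by (simp only: power2_commute)
  moreover have "N \<le> ((N-10)/2)^2"
    using assms(1) mult_nonneg_nonneg[of "N - 20" "N - 4"] by (simp add: power2_eq_square field_simps)
  ultimately show False using assms(2) by linarith
qed

lemma window_cubic_bound:
  fixes N k :: real
  assumes "k + 8 \<ge> 0" and "(k - (N-10)/2)^2 < N"
  shows "(k + 8) * (k - (N-8)/2)^2 \<le> (2*N + 7)^2 / 8"
proof -
  define u where "u = k - (N-8)/2"
  have "u^2 \<le> N - 2*u - 1"
    using assms(2) unfolding u_def by (simp add: power2_eq_square field_simps)
  then have "(k + 8) * u^2 \<le> (k + 8) * (N - 2*u - 1)"
    using assms(1) by (rule mult_left_mono)
  also have "\<dots> = (2*N + 7)^2 / 8 - 2*(u + 9/4)^2"
    unfolding u_def by (simp add: power2_eq_square field_simps)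
  also have "\<dots> \<le> (2*N + 7)^2 / 8" by simp
  finally show ?thesis unfolding u_def .
qed

lemma q2_gt_bound:
  fixes N :: real
  assumes "N \<ge> 20"
  shows "(2*N + 7)^2 * (3*N^2 - 12*N - 8) < 64 * q2 N"
proof -
  have "163 \<le> 12 * (N * (N - 19))"
    using assms mult_mono[of 20 N 1 "N - 19"] by simp
  then have "0 \<le> N^2 * (12 * (N * (N - 19)) - 163)" by simp
  then have "0 < 12*N^4 - 228*N^3 - 163*N^2 + 3884*N + 4488"
    using assms by (simp add: power_def algebra_simps)
  then show ?thesis unfolding q2_eq by (simp add: power_def algebra_simps)
qed

theorem J2_dominates_q2:
  fixes N k :: real
  assumes "N \<ge> 20" and window: "(k - (N-10)/2)^2 < N"
  shows "(1 + 8/k) * J2 N k - q2 N > 0"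
proof -
  define u where "u = k - (N-8)/2"
  define M where "M = 3*N^2 - 12*N - 8"
  have k: "k > 0" using assms by (rule window_imp_pos)
  have "20 * N \<le> N * N" using assms(1) by (simp add: mult_right_mono)
  then have M: "M \<ge> 0"
    using assms(1) unfolding M_def power2_eq_square by linarith
  have expand: "k * ((1 + 8/k) * J2 N k - q2 N) = 8 * q2 N - (k + 8) * u^2 * (M - 6*u^2)"
    using k unfolding J2_eq_q2_minus u_def M_def by (simp add: field_simps)
  have "(k + 8) * u^2 * (M - 6*u^2) \<le> (k + 8) * u^2 * M"
    using k by (simp add: algebra_simps)
  also have "\<dots> \<le> (2*N + 7)^2 / 8 * M"
    using window_cubic_bound[of k N] k window M unfolding u_def by (intro mult_right_mono) auto
  finally have "k * ((1 + 8/k) * J2 N k - q2 N) > 0"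
    using expand q2_gt_bound[OF assms(1)] unfolding M_def by linarith
  then show ?thesis using k by (simp add: zero_less_mult_iff)
qed

theorem lemma8p3:
  fixes n :: nat and k :: real
  assumes "n \<ge> 30"
    and "(real n - 10) / 2 - sqrt (real n) < k"
    and "k < (real n - 10) / 2 + sqrt (real n)"
  shows "let N = real n; p = 1 + 8 / k; q = (N - 8) / 2;
    J2 = (k+4)*(k+6-N)*(k+6)*(k+8-N) + k*(k+2-N)*(k+6)*(k+8-N)
       + (k+2)*(k+4-N)*(k+6)*(k+8-N) + k*(k+2-N)*(k+4)*(k+6-N)
       + (k+2)*(k+4-N)*(k+4)*(k+6-N) + k*(k+2-N)*(k+2)*(k+4-N);
    q2 = ((q+2)*(q+4-N) + q*(q+2-N))^2 + 2*q*(q+2-N)*(q+2)*(q+4-N)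
   in p * J2 - q2 > 0"
proof -
  have "\<bar>k - (real n - 10)/2\<bar> < sqrt (real n)" using assms(2,3) by linarith
  then have "sqrt ((k - (real n - 10)/2)^2) < sqrt (real n)" by simp
  then have "(k - (real n - 10)/2)^2 < real n" by (simp only: real_sqrt_less_iff)
  then have "(1 + 8/k) * J2 (real n) k - q2 (real n) > 0"
    using assms(1) by (intro J2_dominates_q2) auto
  then show ?thesis by (simp add: J2_def q2_def Let_def)
qed

end
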